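(* For $n\ge 3$: $\chi'_{m\Sigma}(K_n)=3$ if $n$ is odd; $\chi'_{m\Sigma}(K_n)=4$ if $n$ is even and $n\ge 6$; and $\chi'_{m\Sigma}(K_4)=5$.
   Context: A $k$-edge-coloring of $G$ is any map $c:E(G)\to\{1,\dots,k\}$ (adjacent edges may share colors). It induces $\sigma_c(v)=\sum_{u\in N(v)}c(vu)$. The coloring is neighbor sum distinguishing (NSD) if $\sigma_c(u)\ne\sigma_c(v)$ for every edge $uv$. It is majority if every vertex $v$ is incident to at most $d(v)/2$ edges of each single color. $\chi'_{m\Sigma}(G)$ denotes the least $k$ such that $G$ has a $k$-edge-coloring that is both majority and NSD. *)

theory Defs
  imports Main
begin

definition nbrs :: "'a set set \<Rightarrow> 'a \<Rightarrow> 'a set" where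
  "nbrs E v = {u. {u, v} \<in> E}"

definition deg :: "'a set set \<Rightarrow> 'a \<Rightarrow> nat" where
  "deg E v = card (nbrs E v)"

definition sigma :: "'a set set \<Rightarrow> ('a set \<Rightarrow> nat) \<Rightarrow> 'a \<Rightarrow> nat" where
  "sigma E c v = (\<Sum>u\<in>nbrs E v. c {v, u})"

definition is_k_edge_coloring :: "'a set set \<Rightarrow> nat \<Rightarrow> ('a set \<Rightarrow> nat) \<Rightarrow> bool" where
  "is_k_edge_coloring E k c \<longleftrightarrow> (\<forall>e\<in>E. c e \<in> {1..k})"

definition nsd :: "'a set set \<Rightarrow> ('a set \<Rightarrow> nat) \<Rightarrow> bool" where
  "nsd E c \<longleftrightarrow> (\<forall>u v. {u, v} \<in> E \<longrightarrow> sigma E c u \<noteq> sigma E c v)"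

definition majority :: "'a set \<Rightarrow> 'a set set \<Rightarrow> ('a set \<Rightarrow> nat) \<Rightarrow> bool" where
  "majority V E c \<longleftrightarrow>
     (\<forall>v\<in>V. \<forall>i. 2 * card {u \<in> nbrs E v. c {v, u} = i} \<le> deg E v)"

definition chi_m_sigma :: "'a set \<Rightarrow> 'a set set \<Rightarrow> nat" where
  "chi_m_sigma V E = (LEAST k. \<exists>c. is_k_edge_coloring E k c \<and> majority V E c \<and> nsd E c)"

definition Kn_V :: "nat \<Rightarrow> nat set" where
  "Kn_V n = {0..<n}"

definition Kn_E :: "nat \<Rightarrow> nat set set" where
  "Kn_E n = {{u, v} | u v. u < n \<and> v < n \<and> u \<noteq> v}"

end

theory Submission
  imports Defs
begin

(* Majority allows at most d(v)/2 edges of one colour at v.  With two colours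
   every vertex of K_n therefore has colour sum 3(n - 1)/2.  With three colours on K_{2m+2}
   each colour class at v has at most m edges, so all 2m + 2 colour sums lie in the 2m - 1
   values 3m+3 .. 5m+1.  On K_4 majority forces a proper colouring, and a finite check
   excludes four colours.

   On K_{2m+1} with vertices 0 .. 2m, colouring uv with 2 if u + v is even,
   with 1 if u + v is odd and below 2m, and with 3 otherwise gives vertex sums 3m + v.
   For K_{2m+2} the new vertex 2m+1 is joined to v by colour 3, 3, 4, 2, 4, 2, ... (v = 0, 1,
   2, ...); the sums 3m + v + c(v) stay distinct and below the new vertex's sum 6m + 4.
   On K_4 colouring uv by u + v gives sums 2v + 6. *)

lemma is_k_edge_coloring_mono:
  "is_k_edge_coloring E j c \<Longrightarrow> j \<le> k \<Longrightarrow> is_k_edge_coloring E k c"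
  unfolding is_k_edge_coloring_def by auto

lemma chi_m_sigma_eqI:
  assumes "is_k_edge_coloring E k c" "majority V E c" "nsd E c"
    and "\<And>c. is_k_edge_coloring E (k - 1) c \<Longrightarrow> majority V E c \<Longrightarrow> nsd E c \<Longrightarrow> False"
  shows "chi_m_sigma V E = k"
  unfolding chi_m_sigma_def
proof (rule Least_equality)
  show "\<exists>c. is_k_edge_coloring E k c \<and> majority V E c \<and> nsd E c"
    using assms(1-3) by blast
  show "k \<le> j" if "\<exists>c. is_k_edge_coloring E j c \<and> majority V E c \<and> nsd E c" for j
  proof (rule ccontr)
    assume "\<not> k \<le> j"
    then have "is_k_edge_coloring E (k - 1) c" if "is_k_edge_coloring E j c" for c
      using that is_k_edge_coloring_mono by fastforce
    then show False
      using \<open>\<exists>c. is_k_edge_coloring E j c \<and> majority V E c \<and> nsd E c\<close> assms(4) by blast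
  qed
qed

lemma sum_nbrs_by_colour:
  assumes "finite (nbrs E v)" "finite K" "\<forall>u\<in>nbrs E v. c {v, u} \<in> K"
  shows "(\<Sum>u\<in>nbrs E v. f (c {v, u})) = (\<Sum>i\<in>K. f i * card {u \<in> nbrs E v. c {v, u} = i})"
proof -
  have "(\<Sum>u\<in>nbrs E v. f (c {v, u})) = (\<Sum>i\<in>K. \<Sum>u\<in>{u \<in> nbrs E v. c {v, u} = i}. f (c {v, u}))"
    using assms by (intro sum.group[symmetric]) auto
  also have "\<dots> = (\<Sum>i\<in>K. f i * card {u \<in> nbrs E v. c {v, u} = i})"
    by (intro sum.cong) auto
  finally show ?thesis .
qed

lemma sigma_by_colour:
  assumes "finite (nbrs E v)" "finite K" "\<forall>u\<in>nbrs E v. c {v, u} \<in> K"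
  shows "sigma E c v = (\<Sum>i\<in>K. i * card {u \<in> nbrs E v. c {v, u} = i})"
  using sum_nbrs_by_colour[OF assms, of id] unfolding sigma_def by simp

lemma deg_by_colour:
  assumes "finite (nbrs E v)" "finite K" "\<forall>u\<in>nbrs E v. c {v, u} \<in> K"
  shows "deg E v = (\<Sum>i\<in>K. card {u \<in> nbrs E v. c {v, u} = i})"
  using sum_nbrs_by_colour[OF assms, of "\<lambda>_. 1"] unfolding deg_def by simp

lemma is_k_edge_coloring_nbrs:
  "is_k_edge_coloring E k c \<Longrightarrow> \<forall>u\<in>nbrs E v. c {v, u} \<in> {1..k}"
  unfolding is_k_edge_coloring_def nbrs_def by (auto simp: insert_commute)

lemma majority_two_colours_sigma:
  assumes "majority V E c" "v \<in> V" "finite (nbrs E v)" "\<forall>u\<in>nbrs E v. c {v, u} \<in> {1, 2}"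
  shows "2 * sigma E c v = 3 * deg E v"
proof -
  have maj: "2 * card {u \<in> nbrs E v. c {v, u} = i} \<le> deg E v" for i
    using assms(1,2) unfolding majority_def by blast
  show ?thesis
    using maj[of 1] maj[of 2] sigma_by_colour[OF assms(3) _ assms(4)] deg_by_colour[OF assms(3) _ assms(4)]
    by simp
qed

lemma majority_three_colours_sigma_bounds:
  assumes "majority V E c" "v \<in> V" "finite (nbrs E v)" "\<forall>u\<in>nbrs E v. c {v, u} \<in> {1, 2, 3}"
    and "deg E v = 2 * m + 1"
  shows "3 * m + 3 \<le> sigma E c v \<and> sigma E c v \<le> 5 * m + 1"
proof -
  define a where "a i = card {u \<in> nbrs E v. c {v, u} = i}" for i
  have maj: "2 * a i \<le> 2 * m + 1" for i
    using assms(1,2,5) unfolding majority_def a_def by metis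
  have "a 1 \<le> m" "a 2 \<le> m" "a 3 \<le> m"
    using maj[of 1] maj[of 2] maj[of 3] by linarith+
  moreover have "sigma E c v = a 1 + 2 * a 2 + 3 * a 3" "a 1 + a 2 + a 3 = 2 * m + 1"
    using sigma_by_colour[OF assms(3) _ assms(4)] deg_by_colour[OF assms(3) _ assms(4)] assms(5)
    unfolding a_def by simp_all
  ultimately show ?thesis
    by linarith
qed

lemma majority_deg_le_3_proper:
  assumes "majority V E c" "v \<in> V" "finite (nbrs E v)" "deg E v \<le> 3"
    and "x \<in> nbrs E v" "y \<in> nbrs E v" "x \<noteq> y"
  shows "c {v, x} \<noteq> c {v, y}"
proof
  assume same: "c {v, x} = c {v, y}"
  let ?S = "{u \<in> nbrs E v. c {v, u} = c {v, x}}"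
  have "{x, y} \<subseteq> ?S" using assms(5,6) same by auto
  then have "2 \<le> card ?S"
    using card_mono[of ?S "{x, y}"] assms(3,7) by simp
  moreover have "2 * card ?S \<le> deg E v" using assms(1,2) unfolding majority_def by blast
  ultimately show False using assms(4) by linarith
qed

lemma edge_Kn: "{u, v} \<in> Kn_E n \<longleftrightarrow> u < n \<and> v < n \<and> u \<noteq> v"
  unfolding Kn_E_def by (auto simp: doubleton_eq_iff)

lemma nbrs_Kn: "v < n \<Longrightarrow> nbrs (Kn_E n) v = {0..<n} - {v}"
  unfolding nbrs_def by (auto simp: edge_Kn)

lemma finite_nbrs_Kn: "finite (nbrs (Kn_E n) v)"
  by (rule finite_subset[of _ "{0..<n}"]) (auto simp: nbrs_def edge_Kn)

lemma deg_Kn: "v < n \<Longrightarrow> deg (Kn_E n) v = n - 1"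
  unfolding deg_def by (simp add: nbrs_Kn)

lemma sigma_Kn: "v < n \<Longrightarrow> sigma (Kn_E n) c v = (\<Sum>u\<in>{0..<n} - {v}. c {v, u})"
  unfolding sigma_def by (simp add: nbrs_Kn)

lemma majority_Kn_iff:
  "majority (Kn_V n) (Kn_E n) c \<longleftrightarrow>
     (\<forall>v<n. \<forall>i. 2 * card {u \<in> {0..<n} - {v}. c {v, u} = i} \<le> n - 1)"
  unfolding majority_def Kn_V_def by (auto simp: nbrs_Kn deg_Kn)

lemma nsd_Kn_iff: "nsd (Kn_E n) c \<longleftrightarrow> inj_on (sigma (Kn_E n) c) {0..<n}"
  unfolding nsd_def inj_on_def edge_Kn atLeast0LessThan Ball_def lessThan_iff by blast

lemma Kn_no_majority_nsd_2_colouring: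
  assumes "2 \<le> n" "is_k_edge_coloring (Kn_E n) 2 c" "majority (Kn_V n) (Kn_E n) c"
  shows "\<not> nsd (Kn_E n) c"
proof -
  have sigma_eq: "2 * sigma (Kn_E n) c v = 3 * (n - 1)" if "v < n" for v
  proof -
    have "\<forall>u\<in>nbrs (Kn_E n) v. c {v, u} \<in> {1, 2}"
      using is_k_edge_coloring_nbrs[OF assms(2), of v] by auto
    then show ?thesis
      using majority_two_colours_sigma[OF assms(3) _ finite_nbrs_Kn] that
      by (simp add: Kn_V_def deg_Kn)
  qed
  have "sigma (Kn_E n) c 0 = sigma (Kn_E n) c 1"
    using sigma_eq[of 0] sigma_eq[of 1] assms(1) by simp
  moreover have "{0, 1} \<in> Kn_E n"
    using assms(1) by (simp add: edge_Kn)
  ultimately show ?thesis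
    unfolding nsd_def by blast
qed

lemma Kn_even_no_majority_nsd_3_colouring:
  assumes "even n" "2 \<le> n" "is_k_edge_coloring (Kn_E n) 3 c" "majority (Kn_V n) (Kn_E n) c"
  shows "\<not> nsd (Kn_E n) c"
proof
  assume "nsd (Kn_E n) c"
  then have inj: "inj_on (sigma (Kn_E n) c) {0..<n}"
    by (simp add: nsd_Kn_iff)
  have "\<exists>m. n = 2 * m + 2"
    using assms(1,2) by presburger
  then obtain m where n: "n = 2 * m + 2" ..
  have "sigma (Kn_E n) c v \<in> {3 * m + 3..5 * m + 1}" if "v < n" for v
  proof -
    have "\<forall>u\<in>nbrs (Kn_E n) v. c {v, u} \<in> {1, 2, 3}"
      using is_k_edge_coloring_nbrs[OF assms(3), of v] by auto
    then show ?thesis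
      using majority_three_colours_sigma_bounds[OF assms(4) _ finite_nbrs_Kn, of v m] that n
      by (simp add: Kn_V_def deg_Kn)
  qed
  then have "sigma (Kn_E n) c ` {0..<n} \<subseteq> {3 * m + 3..5 * m + 1}"
    by auto
  from card_inj_on_le[OF inj this] show False
    using n by simp
qed

(* Conceptually: the sum at a vertex is 10 minus its missing colour,
   so distinct sums make every colour miss exactly one vertex; the colour class would then be
   a matching covering three vertices. *)
lemma proper_4_colouring_K4_sums_not_distinct:
  fixes a01 a02 a03 a12 a13 a23 :: nat
  assumes "a01 \<in> {1..4}" "a02 \<in> {1..4}" "a03 \<in> {1..4}" "a12 \<in> {1..4}" "a13 \<in> {1..4}" "a23 \<in> {1..4}"
    and "distinct [a01, a02, a03]" "distinct [a01, a12, a13]" "distinct [a02, a12, a23]" "distinct [a03, a13, a23]"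
  shows "\<not> distinct [a01 + a02 + a03, a01 + a12 + a13, a02 + a12 + a23, a03 + a13 + a23]"
  using assms by (auto simp: numeral_eq_Suc le_Suc_eq)

lemma K4_no_majority_nsd_4_colouring:
  assumes "is_k_edge_coloring (Kn_E 4) 4 c" "majority (Kn_V 4) (Kn_E 4) c"
  shows "\<not> nsd (Kn_E 4) c"
proof
  assume "nsd (Kn_E 4) c"
  have "{0..<4::nat} = {0, 1, 2, 3}"
    by auto
  then have sums: "sigma (Kn_E 4) c 0 = c {0, 1} + c {0, 2} + c {0, 3}"
    "sigma (Kn_E 4) c 1 = c {0, 1} + c {1, 2} + c {1, 3}"
    "sigma (Kn_E 4) c 2 = c {0, 2} + c {1, 2} + c {2, 3}"
    "sigma (Kn_E 4) c 3 = c {0, 3} + c {1, 3} + c {2, 3}"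
    by (simp_all add: sigma_Kn insert_Diff_if insert_commute)
  have "inj_on (sigma (Kn_E 4) c) (set [0, 1, 2, 3])"
    using \<open>nsd (Kn_E 4) c\<close> by (rule inj_on_subset[OF iffD1[OF nsd_Kn_iff]]) auto
  then have "distinct (map (sigma (Kn_E 4) c) [0, 1, 2, 3])"
    by (simp only: distinct_map) simp
  then have sums_distinct:
    "distinct [c {0, 1} + c {0, 2} + c {0, 3}, c {0, 1} + c {1, 2} + c {1, 3},
               c {0, 2} + c {1, 2} + c {2, 3}, c {0, 3} + c {1, 3} + c {2, 3}]"
    by (simp only: list.map sums)
  have colour: "c {u, v} \<in> {1..4}" if "u < 4" "v < 4" "u \<noteq> v" for u v
    using assms(1) that unfolding is_k_edge_coloring_def by (simp add: edge_Kn)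
  have proper: "c {v, x} \<noteq> c {v, y}"
    if "v < 4" "x < 4" "y < 4" "x \<noteq> v" "y \<noteq> v" "x \<noteq> y" for v x y
    using majority_deg_le_3_proper[OF assms(2) _ finite_nbrs_Kn] that
    by (simp add: Kn_V_def deg_Kn nbrs_Kn)
  have "distinct [c {0, 1}, c {0, 2}, c {0, 3}]" "distinct [c {0, 1}, c {1, 2}, c {1, 3}]"
    "distinct [c {0, 2}, c {1, 2}, c {2, 3}]" "distinct [c {0, 3}, c {1, 3}, c {2, 3}]"
    using proper[of 0 1 2] proper[of 0 1 3] proper[of 0 2 3] proper[of 1 0 2] proper[of 1 0 3] proper[of 1 2 3]
      proper[of 2 0 1] proper[of 2 0 3] proper[of 2 1 3] proper[of 3 0 1] proper[of 3 0 2] proper[of 3 1 2]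
    by (simp_all add: insert_commute)
  from proper_4_colouring_K4_sums_not_distinct[OF colour colour colour colour colour colour this]
  show False
    using sums_distinct by simp
qed

lemma card_same_parity_le:
  fixes A :: "nat set"
  assumes "\<And>x. x \<in> A \<Longrightarrow> even x = e" "A \<subseteq> {a..<a + 2 * k}"
  shows "card A \<le> k"
proof -
  have "inj_on (\<lambda>x. (x - a) div 2) A"
  proof (rule inj_onI)
    fix x y assume "x \<in> A" "y \<in> A" and halves: "(x - a) div 2 = (y - a) div 2"
    obtain p q where x: "x = a + p" and y: "y = a + q"
      using assms(2) \<open>x \<in> A\<close> \<open>y \<in> A\<close> by (metis atLeastLessThan_iff le_Suc_ex subsetD)
    have "even (a + p) = even (a + q)"
      using assms(1)[OF \<open>x \<in> A\<close>] assms(1)[OF \<open>y \<in> A\<close>] unfolding x y by simp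
    then have "even p = even q"
      by (cases "even a") simp_all
    then have "p mod 2 = q mod 2"
      by (simp add: mod2_eq_if)
    moreover have "p div 2 = q div 2"
      using halves unfolding x y by simp
    ultimately show "x = y"
      unfolding x y by (metis div_mult_mod_eq)
  qed
  moreover have "(\<lambda>x. (x - a) div 2) ` A \<subseteq> {..<k}"
    using assms(2) by (auto simp: subset_iff less_diff_conv2 less_mult_imp_div_less)
  ultimately show ?thesis
    using card_inj_on_le[of _ A "{..<k}"] by fastforce
qed

definition colour_of_sum :: "nat \<Rightarrow> nat \<Rightarrow> nat" where
  "colour_of_sum m s = (if even s then 2 else if s < 2 * m then 1 else 3)"

lemma colour_of_sum_eq_iff:
  "colour_of_sum m s = 1 \<longleftrightarrow> odd s \<and> s < 2 * m"
  "colour_of_sum m s = 2 \<longleftrightarrow> even s"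
  "colour_of_sum m s = 3 \<longleftrightarrow> odd s \<and> 2 * m \<le> s"
  by (auto simp: colour_of_sum_def)

lemma sum_colour_of_sum_initial: "j \<le> m \<Longrightarrow> (\<Sum>s<2 * j. colour_of_sum m s) = 3 * j"
  by (induction j) (auto simp: colour_of_sum_def)

lemma sum_colour_of_sum_window:
  "v \<le> 2 * m \<Longrightarrow> (\<Sum>u<2 * m + 1. colour_of_sum m (v + u)) = 3 * m + v + 2"
proof (induction v)
  case 0
  then show ?case
    using sum_colour_of_sum_initial[of m m] by (simp add: colour_of_sum_def)
next
  case (Suc v)
  have "(\<Sum>u<Suc (2 * m). colour_of_sum m (v + u))
        = colour_of_sum m v + (\<Sum>u<2 * m. colour_of_sum m (Suc v + u))"
    by (subst sum.lessThan_Suc_shift) simp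
  moreover have "(\<Sum>u<2 * m + 1. colour_of_sum m (Suc v + u))
        = (\<Sum>u<2 * m. colour_of_sum m (Suc v + u)) + colour_of_sum m (v + 2 * m + 1)"
    by simp
  moreover have "colour_of_sum m (v + 2 * m + 1) = colour_of_sum m v + 1"
    using Suc.prems by (auto simp: colour_of_sum_def)
  ultimately show ?case
    using Suc by simp
qed

lemma sum_colour_of_sum_punctured:
  assumes "v \<le> 2 * m"
  shows "(\<Sum>u\<in>{0..<2 * m + 1} - {v}. colour_of_sum m (v + u)) = 3 * m + v"
proof -
  have "(\<Sum>u\<in>{0..<2 * m + 1}. colour_of_sum m (v + u))
        = colour_of_sum m (v + v) + (\<Sum>u\<in>{0..<2 * m + 1} - {v}. colour_of_sum m (v + u))"
    using assms by (intro sum.remove) auto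
  then show ?thesis
    using sum_colour_of_sum_window[OF assms] by (simp add: atLeast0LessThan colour_of_sum_def)
qed

lemma card_colour_of_sum_1:
  "card {u \<in> {0..<2 * m + 1} - {v}. colour_of_sum m (v + u) = 1} \<le> m"
  unfolding colour_of_sum_eq_iff by (rule card_same_parity_le[where e = "odd v" and a = 0]) auto

lemma card_colour_of_sum_2:
  assumes "v \<le> 2 * m"
  shows "card {u \<in> {0..<2 * m + 1} - {v}. colour_of_sum m (v + u) = 2} + v mod 2 \<le> m"
proof -
  let ?S = "{u \<in> {0..<2 * m + 1} - {v}. colour_of_sum m (v + u) = 2}"
  have parity: "even x = even v" if "x \<in> insert v ?S" for x
    using that unfolding colour_of_sum_eq_iff by auto
  show ?thesis
  proof (cases "even v")
    case True
    have "insert v ?S \<subseteq> {0..<0 + 2 * (m + 1)}"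
      using assms by auto
    from card_same_parity_le[OF parity this] True show ?thesis
      by simp
  next
    case False
    have "insert v ?S \<subseteq> {1..<1 + 2 * m}"
    proof
      fix x assume x: "x \<in> insert v ?S"
      with False have "odd x"
        using parity by blast
      with x assms show "x \<in> {1..<1 + 2 * m}"
        using odd_pos[of x] by auto
    qed
    from card_same_parity_le[OF parity this] False show ?thesis
      by (simp add: mod2_eq_if)
  qed
qed

lemma card_colour_of_sum_3:
  assumes "v \<le> 2 * m"
  shows "card {u \<in> {0..<2 * m + 1} - {v}. colour_of_sum m (v + u) = 3} \<le> m"
  unfolding colour_of_sum_eq_iff
proof (rule card_same_parity_le[where e = "odd v"])
  show "even x = odd v" if "x \<in> {u \<in> {0..<2 * m + 1} - {v}. odd (v + u) \<and> 2 * m \<le> v + u}" for x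
    using that by auto
  show "{u \<in> {0..<2 * m + 1} - {v}. odd (v + u) \<and> 2 * m \<le> v + u} \<subseteq> {1..<1 + 2 * m}"
  proof
    fix x assume x: "x \<in> {u \<in> {0..<2 * m + 1} - {v}. odd (v + u) \<and> 2 * m \<le> v + u}"
    have "x \<noteq> 0"
    proof
      assume "x = 0"
      with x assms have "v + x = 2 * m"
        by simp
      then have "even (v + x)"
        by simp
      with x show False
        by simp
    qed
    with x show "x \<in> {1..<1 + 2 * m}"
      by simp
  qed
qed

lemma card_colour_of_sum_3_low:
  assumes "v \<le> 1" "1 \<le> m"
  shows "card {u \<in> {0..<2 * m + 1} - {v}. colour_of_sum m (v + u) = 3} \<le> 1"
  unfolding colour_of_sum_eq_iff
  by (rule card_same_parity_le[where e = "odd v" and a = "2 * m - 1"]) (use assms in auto)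

lemma card_colour_of_sum_le:
  assumes "v \<le> 2 * m"
  shows "card {u \<in> {0..<2 * m + 1} - {v}. colour_of_sum m (v + u) = i} \<le> m"
proof -
  consider "i = 1" | "i = 2" | "i = 3" | "i \<notin> {1, 2, 3}"
    by auto
  then show ?thesis
  proof cases
    case 1
    then show ?thesis
      using card_colour_of_sum_1 by simp
  next
    case 2
    then show ?thesis
      using card_colour_of_sum_2[OF assms] by simp
  next
    case 3
    then show ?thesis
      using card_colour_of_sum_3[OF assms] by simp
  next
    case 4
    then have "{u \<in> {0..<2 * m + 1} - {v}. colour_of_sum m (v + u) = i} = {}"
      by (auto simp: colour_of_sum_def)
    then show ?thesis
      by (simp only: card.empty)
  qed
qed

definition odd_colouring :: "nat \<Rightarrow> nat set \<Rightarrow> nat" where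
  "odd_colouring m e = colour_of_sum m (\<Sum>e)"

lemma odd_colouring_edge: "u \<noteq> v \<Longrightarrow> odd_colouring m {v, u} = colour_of_sum m (v + u)"
  by (simp add: odd_colouring_def)

lemma is_k_edge_coloring_odd_colouring: "is_k_edge_coloring E 3 (odd_colouring m)"
  unfolding is_k_edge_coloring_def odd_colouring_def colour_of_sum_def by auto

lemma sigma_odd_colouring:
  assumes "v < 2 * m + 1"
  shows "sigma (Kn_E (2 * m + 1)) (odd_colouring m) v = 3 * m + v"
proof -
  have "sigma (Kn_E (2 * m + 1)) (odd_colouring m) v
        = (\<Sum>u\<in>{0..<2 * m + 1} - {v}. colour_of_sum m (v + u))"
    using assms by (simp add: sigma_Kn odd_colouring_edge)
  then show ?thesis
    using assms sum_colour_of_sum_punctured[of v m] by simp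
qed

lemma nsd_odd_colouring: "nsd (Kn_E (2 * m + 1)) (odd_colouring m)"
  unfolding nsd_Kn_iff
proof (rule inj_onI)
  fix x y
  assume "x \<in> {0..<2 * m + 1}" "y \<in> {0..<2 * m + 1}"
    and "sigma (Kn_E (2 * m + 1)) (odd_colouring m) x = sigma (Kn_E (2 * m + 1)) (odd_colouring m) y"
  then show "x = y"
    using sigma_odd_colouring[of x m] sigma_odd_colouring[of y m] by simp
qed

lemma majority_odd_colouring: "majority (Kn_V (2 * m + 1)) (Kn_E (2 * m + 1)) (odd_colouring m)"
  unfolding majority_Kn_iff
proof (intro allI impI)
  fix v i assume "v < 2 * m + 1"
  then have "{u \<in> {0..<2 * m + 1} - {v}. odd_colouring m {v, u} = i}
             = {u \<in> {0..<2 * m + 1} - {v}. colour_of_sum m (v + u) = i}"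
    by (auto simp: odd_colouring_edge)
  then show "2 * card {u \<in> {0..<2 * m + 1} - {v}. odd_colouring m {v, u} = i} \<le> 2 * m + 1 - 1"
    using card_colour_of_sum_le[of v m i] \<open>v < 2 * m + 1\<close> by simp
qed

definition new_vertex_colour :: "nat \<Rightarrow> nat" where
  "new_vertex_colour v = (if v < 2 then 3 else if even v then 4 else 2)"

definition even_colouring :: "nat \<Rightarrow> nat set \<Rightarrow> nat" where
  "even_colouring m e =
     (if 2 * m + 1 \<in> e then new_vertex_colour (\<Sum>e - (2 * m + 1)) else odd_colouring m e)"

lemma even_colouring_old_edge:
  "u \<le> 2 * m \<Longrightarrow> v \<le> 2 * m \<Longrightarrow> u \<noteq> v \<Longrightarrow> even_colouring m {v, u} = colour_of_sum m (v + u)"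
  by (simp add: even_colouring_def odd_colouring_edge)

(* The equation for w lets the simplifier apply these rules after it has rewritten
   2 * m + 1 to Suc (2 * m). *)
lemma even_colouring_new_edge:
  "v \<le> 2 * m \<Longrightarrow> w = 2 * m + 1 \<Longrightarrow> even_colouring m {v, w} = new_vertex_colour v"
  "v \<le> 2 * m \<Longrightarrow> w = 2 * m + 1 \<Longrightarrow> even_colouring m {w, v} = new_vertex_colour v"
  by (simp_all add: even_colouring_def)

lemma is_k_edge_coloring_even_colouring: "is_k_edge_coloring E 4 (even_colouring m)"
  unfolding is_k_edge_coloring_def even_colouring_def odd_colouring_def colour_of_sum_def
    new_vertex_colour_def
  by auto

lemma sum_new_vertex_colour: "0 < m \<Longrightarrow> (\<Sum>u<2 * m + 1. new_vertex_colour u) = 6 * m + 4"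
proof (induction m rule: nat_induct_non_zero)
  case 1
  then show ?case
    by (simp add: new_vertex_colour_def numeral_eq_Suc)
next
  case (Suc m)
  then show ?case
    by (simp add: new_vertex_colour_def)
qed

lemma inj_add_new_vertex_colour: "inj (\<lambda>v. v + new_vertex_colour v)"
  by (rule injI) (auto simp: new_vertex_colour_def split: if_splits dest!: less_2_cases)

lemma card_new_vertex_colour:
  assumes "2 \<le> m"
  shows "card {u \<in> {0..<2 * m + 1}. new_vertex_colour u = i} \<le> m"
proof -
  consider "i = 3" | "i \<noteq> 3"
    by blast
  then show ?thesis
  proof cases
    case 1
    then have "{u \<in> {0..<2 * m + 1}. new_vertex_colour u = i} = {0, 1}"
      using assms by (auto simp: new_vertex_colour_def)
    then show ?thesis
      using assms by simp
  next
    case 2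
    show ?thesis
      by (rule card_same_parity_le[where e = "i = 4" and a = 1])
        (use 2 in \<open>auto simp: new_vertex_colour_def split: if_splits\<close>)
  qed
qed

lemma sigma_even_colouring_old_vertex:
  assumes "v \<le> 2 * m"
  shows "sigma (Kn_E (2 * m + 2)) (even_colouring m) v = 3 * m + v + new_vertex_colour v"
proof -
  have "{0..<2 * m + 2} - {v} = insert (2 * m + 1) ({0..<2 * m + 1} - {v})"
    using assms by auto
  then have "sigma (Kn_E (2 * m + 2)) (even_colouring m) v
        = even_colouring m {v, 2 * m + 1} + (\<Sum>u\<in>{0..<2 * m + 1} - {v}. even_colouring m {v, u})"
    using assms by (simp add: sigma_Kn)
  also have "(\<Sum>u\<in>{0..<2 * m + 1} - {v}. even_colouring m {v, u})
        = (\<Sum>u\<in>{0..<2 * m + 1} - {v}. colour_of_sum m (v + u))"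
    using assms by (intro sum.cong) (auto simp: even_colouring_old_edge)
  finally show ?thesis
    using sum_colour_of_sum_punctured[OF assms] even_colouring_new_edge(1)[OF assms refl] by simp
qed

lemma sigma_even_colouring_new_vertex:
  assumes "0 < m"
  shows "sigma (Kn_E (2 * m + 2)) (even_colouring m) (2 * m + 1) = 6 * m + 4"
proof -
  have "{0..<2 * m + 2} - {2 * m + 1} = {..<2 * m + 1}"
    by auto
  then have "sigma (Kn_E (2 * m + 2)) (even_colouring m) (2 * m + 1)
        = (\<Sum>u<2 * m + 1. even_colouring m {2 * m + 1, u})"
    by (simp add: sigma_Kn)
  also have "\<dots> = (\<Sum>u<2 * m + 1. new_vertex_colour u)"
    by (intro sum.cong) (simp_all add: even_colouring_new_edge)
  finally show ?thesis
    using sum_new_vertex_colour[OF assms] by simp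
qed

lemma nsd_even_colouring:
  assumes "0 < m"
  shows "nsd (Kn_E (2 * m + 2)) (even_colouring m)"
  unfolding nsd_Kn_iff
proof (rule inj_onI)
  let ?\<sigma> = "sigma (Kn_E (2 * m + 2)) (even_colouring m)"
  have old_below_new: "?\<sigma> v < ?\<sigma> (2 * m + 1)" if "v \<le> 2 * m" for v
    using that assms sigma_even_colouring_old_vertex[OF that] sigma_even_colouring_new_vertex[OF assms]
    by (simp add: new_vertex_colour_def)
  fix x y
  assume "x \<in> {0..<2 * m + 2}" "y \<in> {0..<2 * m + 2}" and same: "?\<sigma> x = ?\<sigma> y"
  then consider "x \<le> 2 * m" "y \<le> 2 * m" | "x \<le> 2 * m" "y = 2 * m + 1" | "x = 2 * m + 1" "y \<le> 2 * m"
    | "x = 2 * m + 1" "y = 2 * m + 1"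
    by fastforce
  then show "x = y"
  proof cases
    case 1
    then have "x + new_vertex_colour x = y + new_vertex_colour y"
      using same sigma_even_colouring_old_vertex[of x m] sigma_even_colouring_old_vertex[of y m] by simp
    then show ?thesis
      using injD[OF inj_add_new_vertex_colour, of x y] by simp
  next
    case 2
    then show ?thesis
      using same old_below_new[of x] by simp
  next
    case 3
    then show ?thesis
      using same old_below_new[of y] by simp
  qed simp
qed

lemma card_even_colouring_class_old_vertex:
  assumes "2 \<le> m" "v \<le> 2 * m"
  shows "card {u \<in> {0..<2 * m + 2} - {v}. even_colouring m {v, u} = i} \<le> m"
proof -
  let ?S = "{u \<in> {0..<2 * m + 1} - {v}. colour_of_sum m (v + u) = i}"
  have split: "{0..<2 * m + 2} - {v} = insert (2 * m + 1) ({0..<2 * m + 1} - {v})"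
    using assms by auto
  have old: "{u \<in> {0..<2 * m + 1} - {v}. even_colouring m {v, u} = i} = ?S"
    using assms by (intro Collect_cong) (auto simp: even_colouring_old_edge)
  have "{u \<in> {0..<2 * m + 2} - {v}. even_colouring m {v, u} = i}
      = (if even_colouring m {v, 2 * m + 1} = i
         then insert (2 * m + 1) {u \<in> {0..<2 * m + 1} - {v}. even_colouring m {v, u} = i}
         else {u \<in> {0..<2 * m + 1} - {v}. even_colouring m {v, u} = i})"
    unfolding split by auto
  then have colour_class: "{u \<in> {0..<2 * m + 2} - {v}. even_colouring m {v, u} = i}
      = (if new_vertex_colour v = i then insert (2 * m + 1) ?S else ?S)"
    unfolding old even_colouring_new_edge(1)[OF assms(2) refl] .
  show ?thesis
  proof (cases "new_vertex_colour v = i")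
    case False
    then show ?thesis
      using colour_class card_colour_of_sum_le[OF assms(2)] by simp
  next
    case True
    then consider "v \<le> 1" "i = 3" | "even v" "i = 4" | "odd v" "i = 2"
      by (cases "v < 2"; cases "even v") (auto simp: new_vertex_colour_def)
    then have "card ?S + 1 \<le> m"
    proof cases
      case 1
      then show ?thesis
        using card_colour_of_sum_3_low[of v m] assms by simp
    next
      case 2
      then have "?S = {}"
        by (auto simp: colour_of_sum_def)
      then show ?thesis
        using assms by (simp only: card.empty)
    next
      case 3
      then show ?thesis
        using card_colour_of_sum_2[OF assms(2)] by (simp add: mod2_eq_if)
    qed
    then show ?thesis
      using colour_class True by simp
  qed
qed

lemma majority_even_colouring:
  assumes "2 \<le> m"
  shows "majority (Kn_V (2 * m + 2)) (Kn_E (2 * m + 2)) (even_colouring m)"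
  unfolding majority_Kn_iff
proof (intro allI impI)
  fix v i assume "v < 2 * m + 2"
  have "card {u \<in> {0..<2 * m + 2} - {v}. even_colouring m {v, u} = i} \<le> m"
  proof (cases "v = 2 * m + 1")
    case True
    have "{0..<2 * m + 2} - {v} = {0..<2 * m + 1}"
      using True by auto
    then have "{u \<in> {0..<2 * m + 2} - {v}. even_colouring m {v, u} = i}
        = {u \<in> {0..<2 * m + 1}. new_vertex_colour u = i}"
      using True by (simp add: even_colouring_new_edge(2) cong: conj_cong)
    then show ?thesis
      using card_new_vertex_colour[OF assms] by simp
  next
    case False
    then show ?thesis
      using card_even_colouring_class_old_vertex[OF assms] \<open>v < 2 * m + 2\<close> by simp
  qed
  then show "2 * card {u \<in> {0..<2 * m + 2} - {v}. even_colouring m {v, u} = i} \<le> 2 * m + 2 - 1"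
    by simp
qed

lemma is_k_edge_coloring_Sum_K4: "is_k_edge_coloring (Kn_E 4) 5 Sum"
  unfolding is_k_edge_coloring_def Kn_E_def by auto

lemma sigma_Sum_K4: "v < 4 \<Longrightarrow> sigma (Kn_E 4) Sum v = 2 * v + 6"
proof -
  assume "v < 4"
  have "{0..<4::nat} = {0, 1, 2, 3}"
    by auto
  with \<open>v < 4\<close> show ?thesis
    by (auto simp: sigma_Kn insert_Diff_if)
qed

lemma nsd_Sum_K4: "nsd (Kn_E 4) Sum"
  unfolding nsd_Kn_iff by (rule inj_onI) (simp add: sigma_Sum_K4)

lemma majority_Sum_K4: "majority (Kn_V 4) (Kn_E 4) Sum"
  unfolding majority_Kn_iff
proof (intro allI impI)
  fix v i :: nat assume "v < 4"
  have "{u \<in> {0..<4} - {v}. \<Sum>{v, u} = i} \<subseteq> {i - v}"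
    by auto
  then have "card {u \<in> {0..<4} - {v}. \<Sum>{v, u} = i} \<le> 1"
    using card_mono[of "{i - v}"] by fastforce
  then show "2 * card {u \<in> {0..<4} - {v}. \<Sum>{v, u} = i} \<le> 4 - 1"
    by simp
qed

theorem mainTheorem8:
  fixes n :: nat
  assumes "n \<ge> 3"
  shows "(odd n \<longrightarrow> chi_m_sigma (Kn_V n) (Kn_E n) = 3)
       \<and> (even n \<and> n \<ge> 6 \<longrightarrow> chi_m_sigma (Kn_V n) (Kn_E n) = 4)
       \<and> chi_m_sigma (Kn_V 4) (Kn_E 4) = 5"
proof (intro conjI impI)
  assume "odd n"
  then obtain m where n: "n = 2 * m + 1"
    using oddE by blast
  show "chi_m_sigma (Kn_V n) (Kn_E n) = 3"
    unfolding n
    by (rule chi_m_sigma_eqI[OF is_k_edge_coloring_odd_colouring majority_odd_colouring nsd_odd_colouring])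
      (use Kn_no_majority_nsd_2_colouring assms n in simp)
next
  assume "even n \<and> n \<ge> 6"
  then have "\<exists>m. n = 2 * m + 2 \<and> 2 \<le> m"
    by presburger
  then obtain m where n: "n = 2 * m + 2" and m: "2 \<le> m"
    by blast
  then have "0 < m"
    by simp
  show "chi_m_sigma (Kn_V n) (Kn_E n) = 4"
    unfolding n
    by (rule chi_m_sigma_eqI[OF is_k_edge_coloring_even_colouring majority_even_colouring[OF m]
          nsd_even_colouring[OF \<open>0 < m\<close>]])
      (use Kn_even_no_majority_nsd_3_colouring in simp)
next
  show "chi_m_sigma (Kn_V 4) (Kn_E 4) = 5"
    by (rule chi_m_sigma_eqI[OF is_k_edge_coloring_Sum_K4 majority_Sum_K4 nsd_Sum_K4])
      (use K4_no_majority_nsd_4_colouring in simp)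
qed

end
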